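(* Let $d\in\mathbb{N}$ and let $A$ be a $d\times d$ reclusive matrix. Then the partition graph of the reclusive partition $\mathcal{P}_{A}$ can be properly $(d+1)$-colored; i.e., there is a map $c:\mathcal{P}_A\to\{0,1,\dots,d\}$ such that $c(X)\ne c(Y)$ whenever $X\neq Y$ are adjacent members of $\mathcal{P}_A$.
   Context: A $d\times d$ matrix $A=(a_{ij})$ is reclusive if $a_{ij}=0$ for $i>j$, $a_{ii}=1$ for all $i$, and $a_{ij}>a_{ik}>0$ for all $i\le j<k$. Its reclusive partition is $\mathcal{P}_A=\{A\vec{v}+[0,1)^d:\vec{v}\in\mathbb{Z}^d\}$, a partition of $\mathbb{R}^d$. Two members $X,Y$ are adjacent if $\overline{X}\cap\overline{Y}\neq\emptyset$ (closures). The partition graph has vertex set $\mathcal{P}_A$ and an edge between adjacent members. *)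

theory Defs
  imports "HOL-Analysis.Analysis"
begin

text \<open>Coordinates of R^d are indexed by a finite linearly ordered type 'n
 (isomorphic to {1..d}, d = CARD('n)); entries of A are A $ i $ j.\<close>

definition reclusive :: "real ^ ('n::{finite,linorder}) ^ ('n::{finite,linorder}) \<Rightarrow> bool" where
  "reclusive A \<longleftrightarrow>
     (\<forall>i j. i > j \<longrightarrow> A $ i $ j = 0) \<and>
     (\<forall>i. A $ i $ i = 1) \<and>
     (\<forall>i j k. i \<le> j \<and> j < k \<longrightarrow> A $ i $ j > A $ i $ k \<and> A $ i $ k > 0)"

definition unit_cube :: "(real ^ 'n) set" where
  "unit_cube = {x. \<forall>i. 0 \<le> x $ i \<and> x $ i < 1}"

definition int_vecs :: "(real ^ 'n) set" where
  "int_vecs = {v. \<forall>i. v $ i \<in> \<int>}"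

definition reclusive_partition :: "real ^ 'n ^ 'n \<Rightarrow> (real ^ 'n) set set" where
  "reclusive_partition A = {(\<lambda>x. A *v v + x) ` unit_cube | v. v \<in> int_vecs}"

definition adjacent :: "(real ^ 'n) set \<Rightarrow> (real ^ 'n) set \<Rightarrow> bool" where
  "adjacent X Y \<longleftrightarrow> closure X \<inter> closure Y \<noteq> {}"

end

theory Submission
  imports Defs
begin

text \<open>
  If the closures of the tiles A v + [0,1)^d and A w + [0,1)^d meet, the integer vector
  u = v - w satisfies |(A u)_i| <= 1 for every i. Let s_i = u_i + ... + u_d. Summation by parts
  rewrites row i as (A u)_i = s_i - sum_{j>i} c_j s_j with c_j = a_{i,j-1} - a_{ij} > 0 and
  sum_j c_j = 1 - a_{id} < 1. Going down from i = d, this forces the integers s_i to lie all in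
  {0,1} or all in {0,-1}, and they do not all vanish when u is nonzero. So the weight
  W v = sum_i sum_{j>=i} v_j = sum_j j v_j of adjacent tiles differs by a nonzero integer of
  absolute value at most d, and W mod (d+1) is a proper colouring.\<close>

lemma sum_mult_diff_Suc_by_parts:
  fixes b S :: "nat \<Rightarrow> 'a::comm_ring"
  assumes "k < n"
  shows "(\<Sum>l=k..<n. b l * (S l - S (Suc l))) =
           b k * S k - (\<Sum>l=Suc k..<n. (b (l - 1) - b l) * S l) - b (n - 1) * S n"
  using assms[folded Suc_le_eq] by (induction n rule: dec_induct) (simp_all add: algebra_simps)

definition sign_coherent :: "('a \<Rightarrow> 'b::ring_1) \<Rightarrow> 'a set \<Rightarrow> bool" where
  "sign_coherent s M \<longleftrightarrow> (\<exists>\<sigma>\<in>{1, -1}. \<forall>m\<in>M. \<sigma> * s m \<in> {0, 1})"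

lemma sign_coherent_cong:
  "(\<And>m. m \<in> M \<Longrightarrow> s m = s' m) \<Longrightarrow> sign_coherent s M \<longleftrightarrow> sign_coherent s' M"
  by (simp add: sign_coherent_def)

lemma sign_coherent_image:
  "sign_coherent s (g ` M) \<longleftrightarrow> sign_coherent (\<lambda>m. s (g m)) M"
  by (simp add: sign_coherent_def)

lemma sign_coherent_of_int:
  assumes "sign_coherent s M"
  shows "sign_coherent (\<lambda>m. of_int (s m) :: 'b::ring_1) M"
proof -
  obtain \<sigma> where "\<sigma> \<in> {1, -1}" and "\<forall>m\<in>M. \<sigma> * s m \<in> {0, 1}"
    using assms unfolding sign_coherent_def by blast
  then show ?thesis
    unfolding sign_coherent_def by (intro bexI[of _ "of_int \<sigma>"]) (auto simp flip: of_int_mult)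
qed

lemma sign_coherent_abs_sum_bounds:
  fixes s :: "'a \<Rightarrow> 'b::linordered_idom"
  assumes "finite M" and "sign_coherent s M" and "i \<in> M" and "s i \<noteq> 0"
  shows "1 \<le> \<bar>sum s M\<bar>" and "\<bar>sum s M\<bar> \<le> of_nat (card M)"
proof -
  obtain \<sigma> where \<sigma>: "\<sigma> \<in> {1, -1}" and coherent: "\<And>m. m \<in> M \<Longrightarrow> \<sigma> * s m \<in> {0, 1}"
    using assms(2) unfolding sign_coherent_def by blast
  have unit_interval: "0 \<le> \<sigma> * s m \<and> \<sigma> * s m \<le> 1" if "m \<in> M" for m
    using coherent[OF that] by auto
  have "\<sigma> * s i = 1"
    using coherent[OF \<open>i \<in> M\<close>] \<open>s i \<noteq> 0\<close> \<sigma> by auto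
  have "0 \<le> (\<Sum>m\<in>M. \<sigma> * s m)"
    using unit_interval by (simp add: sum_nonneg)
  then have abs_sum: "\<bar>sum s M\<bar> = (\<Sum>m\<in>M. \<sigma> * s m)"
    using \<sigma> by (auto simp: sum_distrib_left[symmetric] sum_negf)
  show "1 \<le> \<bar>sum s M\<bar>"
    unfolding abs_sum using member_le_sum[of i M "\<lambda>m. \<sigma> * s m"] assms(1,3) unit_interval \<open>\<sigma> * s i = 1\<close>
    by simp
  show "\<bar>sum s M\<bar> \<le> of_nat (card M)"
    unfolding abs_sum using sum_mono[of M "\<lambda>m. \<sigma> * s m" "\<lambda>_. 1"] unit_interval by simp
qed

lemma sign_coherent_insert:
  fixes s :: "'a \<Rightarrow> int" and c :: "'a \<Rightarrow> real"
  assumes "finite L"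
    and c_pos: "\<And>l. l \<in> L \<Longrightarrow> 0 < c l" and c_sum: "sum c L < 1"
    and "sign_coherent s L"
    and close: "\<bar>s k - (\<Sum>l\<in>L. c l * s l)\<bar> \<le> 1"
  shows "sign_coherent s (insert k L)"
proof -
  obtain \<sigma> where \<sigma>: "\<sigma> \<in> {1, -1}" and coherent: "\<And>l. l \<in> L \<Longrightarrow> \<sigma> * s l \<in> {0, 1}"
    using \<open>sign_coherent s L\<close> unfolding sign_coherent_def by blast
  define t where "t = (\<Sum>l\<in>L. c l * real_of_int (\<sigma> * s l))"
  have unit_interval: "0 \<le> real_of_int (\<sigma> * s l) \<and> real_of_int (\<sigma> * s l) \<le> 1" if "l \<in> L" for l
    using coherent[OF that] by (auto simp del: of_int_mult)
  have terms_nonneg: "0 \<le> c l * real_of_int (\<sigma> * s l)" if "l \<in> L" for l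
    using c_pos[OF that] unit_interval[OF that] by simp
  have "t \<le> sum c L"
    unfolding t_def by (rule sum_mono) (use c_pos unit_interval in \<open>auto intro: mult_left_le\<close>)
  then have t_bounds: "0 \<le> t" "t < 1"
    using c_sum terms_nonneg unfolding t_def by (auto intro: sum_nonneg)
  txt \<open>\<open>\<sigma> s k\<close> lies within 1 of \<open>t \<in> [0, 1)\<close>, so it is -1, 0 or 1; the value -1 forces
    \<open>t = 0\<close>, i.e. \<open>s\<close> vanishes on \<open>L\<close>, and then the sign can be flipped.\<close>
  define z where "z = \<sigma> * s k"
  have z_close: "\<bar>real_of_int z - t\<bar> \<le> 1"
    using close \<sigma> by (auto simp: z_def t_def sum_negf algebra_simps abs_minus_commute)
  then have "-1 \<le> real_of_int z" "real_of_int z < 2"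
    using t_bounds by linarith+
  then consider "z \<in> {0, 1}" | "z = -1"
    by fastforce
  then show ?thesis
  proof cases
    case 1
    then show ?thesis
      using \<sigma> coherent unfolding z_def sign_coherent_def by (intro bexI[of _ \<sigma>]) auto
  next
    case 2
    then have "t = 0"
      using z_close t_bounds by simp
    then have "\<sigma> * s l = 0" if "l \<in> L" for l
      using sum_nonneg_eq_0_iff[OF \<open>finite L\<close> terms_nonneg] c_pos[OF that] that
      unfolding t_def by auto
    then show ?thesis
      using 2 \<sigma> unfolding z_def sign_coherent_def by (intro bexI[of _ "- \<sigma>"]) auto
  qed
qed

lemma suffix_sums_sign_coherent:
  fixes B :: "nat \<Rightarrow> nat \<Rightarrow> real" and x :: "nat \<Rightarrow> int"
  assumes diag: "\<And>k. k < d \<Longrightarrow> B k k = 1"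
    and decreasing: "\<And>k l l'. k \<le> l \<Longrightarrow> l < l' \<Longrightarrow> l' < d \<Longrightarrow> B k l' < B k l"
    and pos: "\<And>k l. k \<le> l \<Longrightarrow> l < d \<Longrightarrow> 0 < B k l"
    and row: "\<And>k. k < d \<Longrightarrow> \<bar>\<Sum>l=k..<d. B k l * x l\<bar> \<le> 1"
  shows "sign_coherent (\<lambda>m. \<Sum>l=m..<d. x l) {..<d}"
proof -
  define S where "S m = (\<Sum>l=m..<d. x l)" for m
  have "sign_coherent S {k..<d}" if "k \<le> d" for k
    using that
  proof (induction k rule: inc_induct)
    case base
    show ?case by (auto simp: sign_coherent_def)
  next
    case (step k)
    define c where "c l = B k (l - 1) - B k l" for l
    have x_eq: "x l = S l - S (Suc l)" if "l < d" for l
      using that by (simp add: S_def sum.atLeast_Suc_lessThan)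
    have "(\<Sum>l=k..<d. B k l * x l) = (\<Sum>l=k..<d. B k l * (real_of_int (S l) - real_of_int (S (Suc l))))"
      by (rule sum.cong) (simp_all add: x_eq)
    also have "\<dots> = S k - (\<Sum>l=Suc k..<d. c l * S l)"
      using sum_mult_diff_Suc_by_parts[OF \<open>k < d\<close>, of "B k" "\<lambda>m. real_of_int (S m)"]
        diag[OF \<open>k < d\<close>] by (simp add: S_def c_def)
    finally have "\<bar>S k - (\<Sum>l=Suc k..<d. c l * S l)\<bar> \<le> 1"
      using row[OF \<open>k < d\<close>] by simp
    moreover have "0 < c l" if "l \<in> {Suc k..<d}" for l
      using decreasing[of k "l - 1" l] that by (auto simp: c_def)
    moreover have "sum c {Suc k..<d} = 1 - B k (d - 1)"
    proof -
      have "{Suc k..<d} = {Suc k..d - 1}"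
        using \<open>k < d\<close> by auto
      then show ?thesis
        using sum_telescope''[of k "d - 1" "\<lambda>l. - B k l"] \<open>k < d\<close> diag[OF \<open>k < d\<close>]
        by (simp add: c_def)
    qed
    ultimately have "sign_coherent S (insert k {Suc k..<d})"
      using pos[of k "d - 1"] \<open>k < d\<close> step.IH by (intro sign_coherent_insert) auto
    moreover have "insert k {Suc k..<d} = {k..<d}"
      using \<open>k < d\<close> by auto
    ultimately show ?case by simp
  qed
  from this[of 0] show ?thesis
    by (simp add: S_def[abs_def] atLeast0LessThan)
qed

lemma finite_linorder_enumeration:
  obtains e :: "nat \<Rightarrow> 'a::{finite,linorder}"
  where "\<And>j. \<exists>l<CARD('a). e l = j"
    and "\<And>k l. k < CARD('a) \<Longrightarrow> l < CARD('a) \<Longrightarrow> e k \<le> e l \<longleftrightarrow> k \<le> l"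
proof
  let ?xs = "sorted_list_of_set (UNIV :: 'a set)"
  show "\<exists>l<CARD('a). ?xs ! l = j" for j
    using in_set_conv_nth[of j ?xs] by simp
  have "?xs ! k < ?xs ! l" if "k < l" "l < CARD('a)" for k l
    using sorted_wrt_nth_less[OF strict_sorted_list_of_set that(1)] that(2) by simp
  then show "?xs ! k \<le> ?xs ! l \<longleftrightarrow> k \<le> l" if "k < CARD('a)" "l < CARD('a)" for k l
    using that by (metis linorder_not_less nle_le order_less_imp_le)
qed

lemma sum_atLeast_reindex_enumeration:
  fixes e :: "nat \<Rightarrow> 'a::linorder"
  assumes surj: "\<And>j. \<exists>l<n. e l = j"
    and le_iff: "\<And>k l. k < n \<Longrightarrow> l < n \<Longrightarrow> e k \<le> e l \<longleftrightarrow> k \<le> l"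
    and "m < n"
  shows "(\<Sum>j\<in>{e m..}. f j) = (\<Sum>l=m..<n. f (e l))"
proof -
  have "{e m..} = e ` {m..<n}"
  proof (intro set_eqI iffI)
    fix j assume "j \<in> {e m..}"
    moreover obtain l where "l < n" "e l = j"
      using surj by blast
    ultimately show "j \<in> e ` {m..<n}"
      using le_iff[of m l] \<open>m < n\<close> by auto
  next
    fix j assume "j \<in> e ` {m..<n}"
    then show "j \<in> {e m..}"
      using le_iff[of m] \<open>m < n\<close> by auto
  qed
  moreover have "inj_on e {m..<n}"
  proof (rule inj_onI)
    fix k l assume "k \<in> {m..<n}" "l \<in> {m..<n}" "e k = e l"
    then show "k = l"
      using le_iff[of k l] le_iff[of l k] by auto
  qed
  ultimately show ?thesis
    by (simp add: sum.reindex)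
qed

lemma reclusive_enumerated_entries:
  fixes A :: "real ^ ('n::{finite,linorder}) ^ ('n::{finite,linorder})" and e :: "nat \<Rightarrow> 'n"
  assumes A: "reclusive A" and e_le: "\<And>k l. k < d \<Longrightarrow> l < d \<Longrightarrow> e k \<le> e l \<longleftrightarrow> k \<le> l"
  shows "A $ e k $ e k = 1"
    and "k \<le> l \<Longrightarrow> l < l' \<Longrightarrow> l' < d \<Longrightarrow> A $ e k $ e l' < A $ e k $ e l"
    and "k \<le> l \<Longrightarrow> l < d \<Longrightarrow> 0 < A $ e k $ e l"
proof -
  have e_less: "e k < e l \<longleftrightarrow> k < l" if "k < d" "l < d" for k l
    using e_le that by (meson not_le)
  show "A $ e k $ e k = 1"
    using A by (simp add: reclusive_def)
  show "A $ e k $ e l' < A $ e k $ e l" if "k \<le> l" "l < l'" "l' < d"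
  proof -
    have "e k \<le> e l" "e l < e l'"
      using that e_le e_less by simp_all
    then show ?thesis
      using A unfolding reclusive_def by blast
  qed
  show "0 < A $ e k $ e l" if "k \<le> l" "l < d"
  proof (cases "k = l")
    case False
    then have "e k < e l"
      using that e_less by simp
    then show ?thesis
      using A unfolding reclusive_def by blast
  qed (use A in \<open>simp add: reclusive_def\<close>)
qed

lemma reclusive_mult_vec_nth:
  fixes A :: "real ^ ('n::{finite,linorder}) ^ ('n::{finite,linorder})"
  assumes "reclusive A"
  shows "(A *v u) $ i = (\<Sum>j\<in>{i..}. A $ i $ j * u $ j)"
proof -
  have "(A *v u) $ i = (\<Sum>j\<in>UNIV. A $ i $ j * u $ j)"
    by (simp add: matrix_vector_mult_def)
  also have "\<dots> = (\<Sum>j\<in>{i..}. A $ i $ j * u $ j)"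
    using assms by (intro sum.mono_neutral_right) (auto simp: reclusive_def not_le)
  finally show ?thesis .
qed

lemma of_int_floor_int_vecs_nth:
  "v \<in> int_vecs \<Longrightarrow> real_of_int \<lfloor>v $ i\<rfloor> = v $ i"
  by (auto simp: int_vecs_def Ints_def)

lemma reclusive_suffix_sums_sign_coherent:
  fixes A :: "real ^ ('n::{finite,linorder}) ^ ('n::{finite,linorder})"
  assumes A: "reclusive A" and u: "u \<in> int_vecs" and row: "\<And>i. \<bar>(A *v u) $ i\<bar> \<le> 1"
  shows "sign_coherent (\<lambda>i. \<Sum>j\<in>{i..}. u $ j) UNIV"
proof -
  define d where "d = CARD('n)"
  obtain e :: "nat \<Rightarrow> 'n" where e_surj: "\<And>j. \<exists>l<d. e l = j"
    and e_le: "\<And>k l. k < d \<Longrightarrow> l < d \<Longrightarrow> e k \<le> e l \<longleftrightarrow> k \<le> l"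
    using finite_linorder_enumeration[where 'a = 'n] unfolding d_def by blast
  have sum_atLeast: "(\<Sum>j\<in>{e m..}. f j) = (\<Sum>l=m..<d. f (e l))" if "m < d" for m and f :: "'n \<Rightarrow> real"
    using e_surj e_le that by (rule sum_atLeast_reindex_enumeration)
  define x where "x l = \<lfloor>u $ e l\<rfloor>" for l
  have x: "real_of_int (x l) = u $ e l" for l
    using u by (simp add: x_def of_int_floor_int_vecs_nth)
  have "sign_coherent (\<lambda>m. \<Sum>l=m..<d. x l) {..<d}"
  proof (rule suffix_sums_sign_coherent[where B = "\<lambda>k l. A $ e k $ e l"])
    show "\<bar>\<Sum>l=k..<d. A $ e k $ e l * real_of_int (x l)\<bar> \<le> 1" if "k < d" for k
      using row[of "e k"] by (simp add: reclusive_mult_vec_nth[OF A] sum_atLeast[OF that] x)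
  qed (use reclusive_enumerated_entries[OF A e_le] in auto)
  then have "sign_coherent (\<lambda>m. real_of_int (\<Sum>l=m..<d. x l)) {..<d}"
    by (rule sign_coherent_of_int)
  moreover have "real_of_int (\<Sum>l=m..<d. x l) = (\<Sum>j\<in>{e m..}. u $ j)" if "m \<in> {..<d}" for m
    using that by (simp add: sum_atLeast x)
  ultimately have "sign_coherent (\<lambda>m. \<Sum>j\<in>{e m..}. u $ j) {..<d}"
    using sign_coherent_cong by (metis (no_types, lifting))
  moreover have "UNIV = e ` {..<d}"
    using e_surj by (metis UNIV_eq_I imageI lessThan_iff)
  ultimately show ?thesis
    using sign_coherent_image[of "\<lambda>i. \<Sum>j\<in>{i..}. u $ j" e "{..<d}"] by simp
qed

lemma suffix_sums_not_all_zero: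
  fixes u :: "'a::comm_monoid_add ^ ('n::{finite,linorder})"
  assumes "u \<noteq> 0"
  shows "\<exists>i. (\<Sum>j\<in>{i..}. u $ j) \<noteq> 0"
proof
  define i where "i = Max {j. u $ j \<noteq> 0}"
  have "{j. u $ j \<noteq> 0} \<noteq> {}"
    using assms by (auto simp: vec_eq_iff)
  then have "u $ i \<noteq> 0"
    unfolding i_def using Max_in[of "{j. u $ j \<noteq> 0}"] by simp
  have above_zero: "u $ j = 0" if "i < j" for j
  proof (rule ccontr)
    assume "u $ j \<noteq> 0"
    then have "j \<le> i"
      unfolding i_def by (simp add: Max_ge)
    with that show False by simp
  qed
  have "{i..} = insert i {i<..}"
    by auto
  then have "(\<Sum>j\<in>{i..}. u $ j) = u $ i + (\<Sum>j\<in>{i<..}. u $ j)"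
    by simp
  also have "\<dots> = u $ i"
    using above_zero by simp
  finally show "(\<Sum>j\<in>{i..}. u $ j) \<noteq> 0"
    using \<open>u $ i \<noteq> 0\<close> by simp
qed

lemma closure_translated_unit_cube_nth:
  fixes a p :: "real ^ 'n"
  assumes "p \<in> closure ((\<lambda>x. a + x) ` unit_cube)"
  shows "a $ i \<le> p $ i \<and> p $ i \<le> a $ i + 1"
proof -
  have "(\<lambda>x. a + x) ` unit_cube \<subseteq> cbox a (a + 1)"
    by (auto simp: unit_cube_def mem_box_cart less_imp_le)
  then have "closure ((\<lambda>x. a + x) ` unit_cube) \<subseteq> cbox a (a + 1)"
    by (rule closure_minimal) (rule closed_cbox)
  then show ?thesis
    using assms by (auto simp: mem_box_cart)
qed

lemma adjacent_translated_unit_cubes: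
  fixes a b :: "real ^ 'n"
  assumes "adjacent ((\<lambda>x. a + x) ` unit_cube) ((\<lambda>x. b + x) ` unit_cube)"
  shows "\<bar>(a - b) $ i\<bar> \<le> 1"
proof -
  obtain p where "p \<in> closure ((\<lambda>x. a + x) ` unit_cube)" "p \<in> closure ((\<lambda>x. b + x) ` unit_cube)"
    using assms unfolding adjacent_def by blast
  then have "a $ i \<le> p $ i \<and> p $ i \<le> a $ i + 1" "b $ i \<le> p $ i \<and> p $ i \<le> b $ i + 1"
    by (simp_all add: closure_translated_unit_cube_nth)
  then show ?thesis
    by (simp add: abs_le_iff)
qed

definition suffix_weight :: "real ^ ('n::{finite,linorder}) \<Rightarrow> int" where
  "suffix_weight v = (\<Sum>i\<in>UNIV. \<Sum>j\<in>{i..}. \<lfloor>v $ j\<rfloor>)"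

lemma suffix_weight_diff:
  assumes "v \<in> int_vecs" and "w \<in> int_vecs"
  shows "real_of_int (suffix_weight v - suffix_weight w) = (\<Sum>i\<in>UNIV. \<Sum>j\<in>{i..}. (v - w) $ j)"
  using assms by (simp add: suffix_weight_def of_int_floor_int_vecs_nth sum_subtractf)

lemma suffix_weight_mod_neq:
  fixes A :: "real ^ ('n::{finite,linorder}) ^ ('n::{finite,linorder})"
  assumes A: "reclusive A" and v: "v \<in> int_vecs" and w: "w \<in> int_vecs" and "v \<noteq> w"
    and row: "\<And>i. \<bar>(A *v (v - w)) $ i\<bar> \<le> 1"
  shows "suffix_weight v mod int (CARD('n) + 1) \<noteq> suffix_weight w mod int (CARD('n) + 1)"
proof
  define \<delta> where "\<delta> = suffix_weight v - suffix_weight w"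
  define s where "s i = (\<Sum>j\<in>{i..}. (v - w) $ j)" for i
  have "v - w \<in> int_vecs"
    using v w by (auto simp: int_vecs_def)
  then have "sign_coherent s UNIV"
    using reclusive_suffix_sums_sign_coherent[OF A _ row] unfolding s_def[abs_def] by blast
  moreover obtain i where "s i \<noteq> 0"
    using suffix_sums_not_all_zero[of "v - w"] \<open>v \<noteq> w\<close> unfolding s_def by auto
  moreover have "real_of_int \<delta> = sum s UNIV"
    using suffix_weight_diff[OF v w] by (simp add: \<delta>_def s_def)
  ultimately have "1 \<le> \<bar>\<delta>\<bar>" "\<bar>\<delta>\<bar> < CARD('n) + 1"
    using sign_coherent_abs_sum_bounds[of UNIV s i] by auto
  assume "suffix_weight v mod int (CARD('n) + 1) = suffix_weight w mod int (CARD('n) + 1)"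
  then have "int (CARD('n) + 1) dvd \<delta>"
    by (simp add: \<delta>_def mod_eq_dvd_iff)
  then have "\<bar>int (CARD('n) + 1)\<bar> \<le> \<bar>\<delta>\<bar>"
    using \<open>1 \<le> \<bar>\<delta>\<bar>\<close> by (intro dvd_imp_le_int) auto
  then show False
    using \<open>\<bar>\<delta>\<bar> < CARD('n) + 1\<close> by simp
qed

definition tile_vector :: "real ^ ('n::{finite,linorder}) ^ ('n::{finite,linorder}) \<Rightarrow> (real ^ ('n::{finite,linorder})) set \<Rightarrow> real ^ ('n::{finite,linorder})" where
  "tile_vector A X = (SOME v. v \<in> int_vecs \<and> X = (\<lambda>x. A *v v + x) ` unit_cube)"

lemma tile_vector:
  assumes "X \<in> reclusive_partition A"
  shows "tile_vector A X \<in> int_vecs" and "X = (\<lambda>x. A *v tile_vector A X + x) ` unit_cube"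
proof -
  obtain v where "v \<in> int_vecs \<and> X = (\<lambda>x. A *v v + x) ` unit_cube"
    using assms unfolding reclusive_partition_def by blast
  then have "tile_vector A X \<in> int_vecs \<and> X = (\<lambda>x. A *v tile_vector A X + x) ` unit_cube"
    unfolding tile_vector_def by (rule someI)
  then show "tile_vector A X \<in> int_vecs" and "X = (\<lambda>x. A *v tile_vector A X + x) ` unit_cube"
    by simp_all
qed

definition tile_colour :: "real ^ ('n::{finite,linorder}) ^ ('n::{finite,linorder}) \<Rightarrow> (real ^ ('n::{finite,linorder})) set \<Rightarrow> nat" where
  "tile_colour A X = nat (suffix_weight (tile_vector A X) mod int (CARD('n) + 1))"

lemma tile_colour_le:
  fixes A :: "real ^ ('n::{finite,linorder}) ^ ('n::{finite,linorder})"
  shows "tile_colour A X \<le> CARD('n)"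
proof -
  have "suffix_weight (tile_vector A X) mod int (CARD('n) + 1) < int (CARD('n) + 1)"
    by (rule pos_mod_bound) simp
  then show ?thesis
    unfolding tile_colour_def nat_le_iff by linarith
qed

lemma tile_colour_adjacent_neq:
  fixes A :: "real ^ ('n::{finite,linorder}) ^ ('n::{finite,linorder})"
  assumes "reclusive A" and X: "X \<in> reclusive_partition A" and Y: "Y \<in> reclusive_partition A"
    and "X \<noteq> Y" and "adjacent X Y"
  shows "tile_colour A X \<noteq> tile_colour A Y"
proof -
  have "tile_vector A X \<noteq> tile_vector A Y"
    using tile_vector(2)[OF X] tile_vector(2)[OF Y] \<open>X \<noteq> Y\<close> by metis
  moreover have "\<bar>(A *v (tile_vector A X - tile_vector A Y)) $ i\<bar> \<le> 1" for i
    using adjacent_translated_unit_cubes[of "A *v tile_vector A X" "A *v tile_vector A Y" i]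
      tile_vector(2)[OF X] tile_vector(2)[OF Y] \<open>adjacent X Y\<close>
    by (simp add: matrix_vector_mult_diff_distrib)
  ultimately show ?thesis
    using suffix_weight_mod_neq[OF \<open>reclusive A\<close>] tile_vector(1)[OF X] tile_vector(1)[OF Y]
    by (simp add: tile_colour_def eq_nat_nat_iff)
qed

theorem mainTheorem11:
  fixes A :: "real ^ ('n::{finite,linorder}) ^ ('n::{finite,linorder})"
  assumes "reclusive A"
  shows "\<exists>c :: (real ^ ('n::{finite,linorder})) set \<Rightarrow> nat.
           (\<forall>X \<in> reclusive_partition A. c X \<le> CARD('n::{finite,linorder})) \<and>
           (\<forall>X \<in> reclusive_partition A. \<forall>Y \<in> reclusive_partition A.
              X \<noteq> Y \<and> adjacent X Y \<longrightarrow> c X \<noteq> c Y)"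
  using tile_colour_le tile_colour_adjacent_neq[OF assms] by blast

end
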